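(* For all closed terms $t_0,t_1$ of $\lambda_S$, if $t_0\equiv^E_p t_1$ then $t_0\approx^p_{\emptyset}t_1$.
   Context: Terms of $\lambda_S$: $t ::= x \mid \lambda x.t \mid t\,t \mid \mathcal{S}k.t \mid \langle t\rangle$ (shift binds $k$; $\langle\cdot\rangle$ is reset), up to $\alpha$-conversion. Values $v::=\lambda x.t$. Pure contexts $E ::= \Box \mid v\,E \mid E\,t$; evaluation contexts $F ::= \Box \mid v\,F \mid F\,t \mid \langle F\rangle$. Reduction: $F[(\lambda x.t)v]\to F[t\{v/x\}]$; $F[\langle E[\mathcal Sk.t]\rangle]\to F[\langle t\{\lambda x.\langle E[x]\rangle/k\}\rangle]$ ($x\notin\mathrm{fv}(E)$); $F[\langle v\rangle]\to F[v]$; $\to^*$ reflexive-transitive closure; $t\Downarrow t'$ iff $t\to^*t'$ and $t'$ irreducible. A program is a term $\langle t\rangle$ (ranged over by $p$). Closures: for $R$ a relation on closed terms, $\widetilde R$ is the smallest relation containing $R$, all $(x,x)$, closed under all term constructors, restricted to closed terms; $\widehat R$ is the smallest relation on closed evaluation contexts with $\Box\widehat R\Box$, $v_0F_0\widehat Rv_1F_1$ if $F_0\widehat RF_1,v_0\widetilde Rv_1$; $F_0t_0\widehat RF_1t_1$ if $F_0\widehat RF_1,t_0\widetilde Rt_1$; $\langle F_0\rangle\widehat R\langle F_1\rangle$ if $F_0\widehat RF_1$. Environmental bisimilarity for programs: an environment $\mathcal E$ is a relation on closed values; an environmental relation $\mathcal X$ is a set of environments and triples $(\mathcal E,t_0,t_1)$,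 $t_0,t_1$ closed, written $t_0\mathcal X_{\mathcal E}t_1$. $\mathcal X$ is an environmental bisimulation for programs if (1) if $t_0\mathcal X_{\mathcal E}t_1$ and $t_0,t_1$ are not both programs, then for all pure $E_0\widehat{\mathcal E}E_1$, $\langle E_0[t_0]\rangle\mathcal X_{\mathcal E}\langle E_1[t_1]\rangle$; (2) if $p_0\mathcal X_{\mathcal E}p_1$: (a) $p_0\to p_0'$ (a program) implies $p_1\to^*p_1'$ (a program) with $p_0'\mathcal X_{\mathcal E}p_1'$; (b) $p_0\to v_0$ implies $p_1\to^*v_1$ and $\{(v_0,v_1)\}\cup\mathcal E\in\mathcal X$; (c) symmetric conditions for $p_1$; (3) for $\mathcal E\in\mathcal X$, $(\lambda x.t_0)\mathcal E(\lambda x.t_1)$ and $v_0\widetilde{\mathcal E}v_1$ imply $t_0\{v_0/x\}\mathcal X_{\mathcal E}t_1\{v_1/x\}$. $\approx^p$ is the largest such relation; $t_0\approx^p_{\mathcal E}t_1$ means $(\mathcal E,t_0,t_1)\in\approx^p$. Evaluation-context equivalence: for closed $t_0,t_1$, $t_0\equiv^E_pt_1$ iff for every closed evaluation context $F$, $\langle F[t_0]\rangle\Downarrow$ a value iff $\langle F[t_1]\rangle\Downarrow$ a value. *)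

theory Defs
  imports Main
begin

section \<open>Terms of lambda_S (locally nameless / de Bruijn, so alpha-equivalence is equality)\<close>

text \<open>Shift t binds index 0 in t (the continuation variable k); Lam t binds index 0 in t.\<close>
datatype trm = Var nat | Lam trm | App trm trm | Shift trm | Reset trm

fun closed_at :: "nat \<Rightarrow> trm \<Rightarrow> bool" where
  "closed_at n (Var i) = (i < n)"
| "closed_at n (Lam t) = closed_at (Suc n) t"
| "closed_at n (App t u) = (closed_at n t \<and> closed_at n u)"
| "closed_at n (Shift t) = closed_at (Suc n) t"
| "closed_at n (Reset t) = closed_at n t"

definition closed :: "trm \<Rightarrow> bool" where
  "closed t = closed_at 0 t"

fun lift :: "nat \<Rightarrow> trm \<Rightarrow> trm" where
  "lift k (Var i) = (if i < k then Var i else Var (Suc i))"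
| "lift k (Lam t) = Lam (lift (Suc k) t)"
| "lift k (App t u) = App (lift k t) (lift k u)"
| "lift k (Shift t) = Shift (lift (Suc k) t)"
| "lift k (Reset t) = Reset (lift k t)"

fun subst :: "nat \<Rightarrow> trm \<Rightarrow> trm \<Rightarrow> trm" where
  "subst k s (Var i) = (if i = k then s else if k < i then Var (i - 1) else Var i)"
| "subst k s (Lam t) = Lam (subst (Suc k) (lift 0 s) t)"
| "subst k s (App t u) = App (subst k s t) (subst k s u)"
| "subst k s (Shift t) = Shift (subst (Suc k) (lift 0 s) t)"
| "subst k s (Reset t) = Reset (subst k s t)"

definition is_val :: "trm \<Rightarrow> bool" where
  "is_val t = (\<exists>b. t = Lam b)"

definition is_prog :: "trm \<Rightarrow> bool" where
  "is_prog t = (\<exists>s. t = Reset s)"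

datatype ctx = Hole | CArgR trm ctx | CAppL ctx trm | CReset ctx

fun plug :: "ctx \<Rightarrow> trm \<Rightarrow> trm" where
  "plug Hole t = t"
| "plug (CArgR v F) t = App v (plug F t)"
| "plug (CAppL F u) t = App (plug F t) u"
| "plug (CReset F) t = Reset (plug F t)"

fun liftc :: "nat \<Rightarrow> ctx \<Rightarrow> ctx" where
  "liftc k Hole = Hole"
| "liftc k (CArgR v F) = CArgR (lift k v) (liftc k F)"
| "liftc k (CAppL F u) = CAppL (liftc k F) (lift k u)"
| "liftc k (CReset F) = CReset (liftc k F)"

fun evctx :: "ctx \<Rightarrow> bool" where
  "evctx Hole = True"
| "evctx (CArgR v F) = (is_val v \<and> evctx F)"
| "evctx (CAppL F u) = evctx F"
| "evctx (CReset F) = evctx F"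

fun pure :: "ctx \<Rightarrow> bool" where
  "pure Hole = True"
| "pure (CArgR v F) = (is_val v \<and> pure F)"
| "pure (CAppL F u) = pure F"
| "pure (CReset F) = False"

fun closed_ctx :: "ctx \<Rightarrow> bool" where
  "closed_ctx Hole = True"
| "closed_ctx (CArgR v F) = (closed v \<and> closed_ctx F)"
| "closed_ctx (CAppL F u) = (closed_ctx F \<and> closed u)"
| "closed_ctx (CReset F) = closed_ctx F"

inductive red :: "trm \<Rightarrow> trm \<Rightarrow> bool" where
  beta: "evctx F \<Longrightarrow> is_val v \<Longrightarrow>
    red (plug F (App (Lam t) v)) (plug F (subst 0 v t))"
| shift: "evctx F \<Longrightarrow> pure E \<Longrightarrow>
    red (plug F (Reset (plug E (Shift t))))
        (plug F (Reset (subst 0 (Lam (Reset (plug (liftc 0 E) (Var 0)))) t)))"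
| reset: "evctx F \<Longrightarrow> is_val v \<Longrightarrow> red (plug F (Reset v)) (plug F v)"

abbreviation reds :: "trm \<Rightarrow> trm \<Rightarrow> bool" where
  "reds \<equiv> red\<^sup>*\<^sup>*"

definition evals :: "trm \<Rightarrow> trm \<Rightarrow> bool" where
  "evals t t' = (reds t t' \<and> \<not> (\<exists>u. red t' u))"

definition evals_to_value :: "trm \<Rightarrow> bool" where
  "evals_to_value t = (\<exists>v. evals t v \<and> is_val v)"

definition ctx_equiv_p :: "trm \<Rightarrow> trm \<Rightarrow> bool" where
  "ctx_equiv_p t0 t1 = (\<forall>F. evctx F \<and> closed_ctx F \<longrightarrow>
      (evals_to_value (Reset (plug F t0)) \<longleftrightarrow> evals_to_value (Reset (plug F t1))))"

inductive term_cl :: "(trm \<times> trm) set \<Rightarrow> trm \<Rightarrow> trm \<Rightarrow> bool" for R where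
  base: "(a, b) \<in> R \<Longrightarrow> term_cl R a b"
| var: "term_cl R (Var i) (Var i)"
| lam: "term_cl R t t' \<Longrightarrow> term_cl R (Lam t) (Lam t')"
| app: "term_cl R t t' \<Longrightarrow> term_cl R u u' \<Longrightarrow> term_cl R (App t u) (App t' u')"
| sft: "term_cl R t t' \<Longrightarrow> term_cl R (Shift t) (Shift t')"
| rst: "term_cl R t t' \<Longrightarrow> term_cl R (Reset t) (Reset t')"

definition tilde :: "(trm \<times> trm) set \<Rightarrow> trm \<Rightarrow> trm \<Rightarrow> bool" where
  "tilde R t t' = (term_cl R t t' \<and> closed t \<and> closed t')"

inductive hat :: "(trm \<times> trm) set \<Rightarrow> ctx \<Rightarrow> ctx \<Rightarrow> bool" for R where
  hole: "hat R Hole Hole"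
| argr: "hat R F0 F1 \<Longrightarrow> is_val v0 \<Longrightarrow> is_val v1 \<Longrightarrow> tilde R v0 v1 \<Longrightarrow>
         hat R (CArgR v0 F0) (CArgR v1 F1)"
| appl: "hat R F0 F1 \<Longrightarrow> tilde R t0 t1 \<Longrightarrow> hat R (CAppL F0 t0) (CAppL F1 t1)"
| rst: "hat R F0 F1 \<Longrightarrow> hat R (CReset F0) (CReset F1)"

type_synonym env = "(trm \<times> trm) set"

text \<open>An environmental relation is a set of environments (Env E) and triples (Tri E t0 t1).\<close>
datatype envrel_elem = Env env | Tri env trm trm

definition is_env :: "env \<Rightarrow> bool" where
  "is_env E = (\<forall>(v0, v1) \<in> E. is_val v0 \<and> is_val v1 \<and> closed v0 \<and> closed v1)"

definition env_rel :: "envrel_elem set \<Rightarrow> bool" where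
  "env_rel X = ((\<forall>E. Env E \<in> X \<longrightarrow> is_env E) \<and>
     (\<forall>E t0 t1. Tri E t0 t1 \<in> X \<longrightarrow> is_env E \<and> closed t0 \<and> closed t1))"

definition env_bisim_p :: "envrel_elem set \<Rightarrow> bool" where
  "env_bisim_p X = (env_rel X \<and>
    \<comment> \<open>(1)\<close>
    (\<forall>E t0 t1. Tri E t0 t1 \<in> X \<and> \<not> (is_prog t0 \<and> is_prog t1) \<longrightarrow>
       (\<forall>E0 E1. pure E0 \<and> pure E1 \<and> hat E E0 E1 \<longrightarrow>
          Tri E (Reset (plug E0 t0)) (Reset (plug E1 t1)) \<in> X)) \<and>
    \<comment> \<open>(2)\<close>
    (\<forall>E p0 p1. Tri E p0 p1 \<in> X \<and> is_prog p0 \<and> is_prog p1 \<longrightarrow>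
       (\<forall>p0'. red p0 p0' \<and> is_prog p0' \<longrightarrow>
          (\<exists>p1'. reds p1 p1' \<and> is_prog p1' \<and> Tri E p0' p1' \<in> X)) \<and>
       (\<forall>v0. red p0 v0 \<and> is_val v0 \<longrightarrow>
          (\<exists>v1. reds p1 v1 \<and> is_val v1 \<and> Env ({(v0, v1)} \<union> E) \<in> X)) \<and>
       (\<forall>p1'. red p1 p1' \<and> is_prog p1' \<longrightarrow>
          (\<exists>p0'. reds p0 p0' \<and> is_prog p0' \<and> Tri E p0' p1' \<in> X)) \<and>
       (\<forall>v1. red p1 v1 \<and> is_val v1 \<longrightarrow>
          (\<exists>v0. reds p0 v0 \<and> is_val v0 \<and> Env ({(v0, v1)} \<union> E) \<in> X))) \<and>
    \<comment> \<open>(3)\<close>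
    (\<forall>E t0 t1 v0 v1. Env E \<in> X \<and> (Lam t0, Lam t1) \<in> E \<and>
        is_val v0 \<and> is_val v1 \<and> tilde E v0 v1 \<longrightarrow>
       Tri E (subst 0 v0 t0) (subst 0 v1 t1) \<in> X))"

definition env_bisimilar_p :: "envrel_elem set" where
  "env_bisimilar_p = \<Union>{X. env_bisim_p X}"

definition bisim_p :: "env \<Rightarrow> trm \<Rightarrow> trm \<Rightarrow> bool" where
  "bisim_p E t0 t1 = (Tri E t0 t1 \<in> env_bisimilar_p)"

end

theory Submission
  imports Defs
begin

text \<open>
  Relate \<open>t\<^sub>0\<close> and \<open>t\<^sub>1\<close> under an environment \<open>E\<close> when \<open>\<langle>F\<^sub>0[t\<^sub>0]\<rangle>\<close> and \<open>\<langle>F\<^sub>1[t\<^sub>1]\<rangle>\<close>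
  agree on converging to a value for all \<open>\<widehat>E\<close>-related evaluation contexts, and admit
  \<open>E\<close> itself when all \<open>\<widetilde>E\<close>-related programs agree in this way. Reduction is
  deterministic and closed under evaluation contexts, so a step never changes convergence;
  together with composition of contexts this gives clause (1) and the program steps of
  clause (2), and clause (3) is a single beta step. If \<open>p\<^sub>0\<close> and \<open>p\<^sub>1\<close> reduce to values
  \<open>v\<^sub>0\<close> and \<open>v\<^sub>1\<close>, every pair related by the extended environment has the form
  \<open>(t\<^sub>0{v\<^sub>0/x}, t\<^sub>1{v\<^sub>1/x})\<close> with \<open>t\<^sub>0 \<widetilde>E t\<^sub>1\<close>, and \<open>\<langle>(\<lambda>x. t\<^sub>i) p\<^sub>i\<rangle>\<close> reduces
  to \<open>\<langle>t\<^sub>i{v\<^sub>i/x}\<rangle>\<close>, so the extended environment is admitted as well. Since \<open>\<widehat>\<emptyset>\<close> is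
  the identity on closed evaluation contexts, context-equivalent terms are related under \<open>\<emptyset>\<close>.
\<close>

lemma subst_lift [simp]: "subst k s (lift k t) = t"
  by (induction t arbitrary: k s) auto

lemma lift_closed_at: "closed_at n t \<Longrightarrow> n \<le> k \<Longrightarrow> lift k t = t"
  by (induction t arbitrary: n k) auto

lemma lift_closed: "closed t \<Longrightarrow> lift k t = t"
  using lift_closed_at by (simp add: closed_def)

lemma subst_closed_at: "closed_at n t \<Longrightarrow> n \<le> k \<Longrightarrow> subst k s t = t"
  by (induction t arbitrary: n k s) auto

lemma closed_at_mono: "closed_at n t \<Longrightarrow> n \<le> m \<Longrightarrow> closed_at m t"
  by (induction t arbitrary: n m) auto

lemma closed_at_lift: "closed_at n t \<Longrightarrow> closed_at (Suc n) (lift k t)"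
  by (induction t arbitrary: n k) auto

lemma closed_at_subst_iff:
  assumes "closed v" and "k \<le> m"
  shows "closed_at m (subst k v t) \<longleftrightarrow> closed_at (Suc m) t"
  using assms
proof (induction t arbitrary: m k)
  case (Var i)
  then show ?case using closed_at_mono[of 0 v m] by (auto simp: closed_def)
qed (auto simp: lift_closed)

fun closed_ctx_at :: "nat \<Rightarrow> ctx \<Rightarrow> bool" where
  "closed_ctx_at n Hole = True"
| "closed_ctx_at n (CArgR v F) = (closed_at n v \<and> closed_ctx_at n F)"
| "closed_ctx_at n (CAppL F u) = (closed_ctx_at n F \<and> closed_at n u)"
| "closed_ctx_at n (CReset F) = closed_ctx_at n F"

lemma closed_at_plug [simp]: "closed_at n (plug F t) = (closed_ctx_at n F \<and> closed_at n t)"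
  by (induction F) auto

lemma closed_ctx_eq_closed_ctx_at: "closed_ctx F = closed_ctx_at 0 F"
  by (induction F) (auto simp: closed_def)

lemma closed_ctx_at_liftc: "closed_ctx_at n F \<Longrightarrow> closed_ctx_at (Suc n) (liftc k F)"
  by (induction F) (auto intro: closed_at_lift)

lemma red_closed: "red t u \<Longrightarrow> closed t \<Longrightarrow> closed u"
proof (induction rule: red.induct)
  case (shift F E t)
  then have "closed (Lam (Reset (plug (liftc 0 E) (Var 0))))"
    by (simp add: closed_def closed_ctx_at_liftc)
  with shift show ?case by (simp add: closed_def closed_at_subst_iff[unfolded closed_def])
qed (auto simp: closed_def closed_at_subst_iff[unfolded closed_def])

lemma reds_closed: "reds t u \<Longrightarrow> closed t \<Longrightarrow> closed u"
  by (induction rule: rtranclp_induct) (auto intro: red_closed)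

fun ctx_comp :: "ctx \<Rightarrow> ctx \<Rightarrow> ctx" where
  "ctx_comp Hole G = G"
| "ctx_comp (CArgR v F) G = CArgR v (ctx_comp F G)"
| "ctx_comp (CAppL F u) G = CAppL (ctx_comp F G) u"
| "ctx_comp (CReset F) G = CReset (ctx_comp F G)"

lemma plug_ctx_comp [simp]: "plug (ctx_comp F G) t = plug F (plug G t)"
  by (induction F) auto

lemma evctx_ctx_comp: "evctx F \<Longrightarrow> evctx G \<Longrightarrow> evctx (ctx_comp F G)"
  by (induction F) auto

lemma red_plug: "red t t' \<Longrightarrow> evctx F \<Longrightarrow> red (plug F t) (plug F t')"
proof (induction rule: red.induct)
  case (beta G v t)
  then show ?case using red.beta[of "ctx_comp F G" v t] by (simp add: evctx_ctx_comp)
next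
  case (shift G E t)
  then show ?case using red.shift[of "ctx_comp F G" E t] by (simp add: evctx_ctx_comp)
next
  case (reset G v)
  then show ?case using red.reset[of "ctx_comp F G" v] by (simp add: evctx_ctx_comp)
qed

lemma reds_plug: "reds t t' \<Longrightarrow> evctx F \<Longrightarrow> reds (plug F t) (plug F t')"
  by (induction rule: rtranclp_induct) (auto intro: red_plug rtranclp.rtrancl_into_rtrancl)

lemma red_Reset_plug: "red t t' \<Longrightarrow> evctx F \<Longrightarrow> red (Reset (plug F t)) (Reset (plug F t'))"
  using red_plug[of t t' "CReset F"] by simp

lemma reds_Reset_beta:
  "reds t v \<Longrightarrow> is_val v \<Longrightarrow> reds (Reset (App (Lam b) t)) (Reset (subst 0 v b))"
proof -
  assume t: "reds t v" and v: "is_val v"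
  have "reds (plug (CReset (CArgR (Lam b) Hole)) t) (plug (CReset (CArgR (Lam b) Hole)) v)"
    by (rule reds_plug[OF t]) (simp add: is_val_def)
  moreover have "red (plug (CReset Hole) (App (Lam b) v)) (plug (CReset Hole) (subst 0 v b))"
    by (rule red.beta) (use v in auto)
  ultimately show ?thesis by simp
qed

text \<open>
  Reduction is the graph of the partial function \<open>step\<close> below; \<open>split_shift s\<close> finds
  the decomposition \<open>s = E[\<S>k. b]\<close> with \<open>E\<close> pure, if any.
\<close>

fun split_shift :: "trm \<Rightarrow> (ctx \<times> trm) option" where
  "split_shift (Shift b) = Some (Hole, b)"
| "split_shift (App t u) =
    (if is_val t then map_option (\<lambda>(E, b). (CArgR t E, b)) (split_shift u)
     else map_option (\<lambda>(E, b). (CAppL E u, b)) (split_shift t))"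
| "split_shift _ = None"

fun step :: "trm \<Rightarrow> trm option" where
  "step (App t u) =
    (if is_val t then
       (if is_val u then (case t of Lam b \<Rightarrow> Some (subst 0 u b) | _ \<Rightarrow> None)
        else map_option (App t) (step u))
     else map_option (\<lambda>t'. App t' u) (step t))"
| "step (Reset s) =
    (if is_val s then Some s
     else (case step s of
             Some s' \<Rightarrow> Some (Reset s')
           | None \<Rightarrow> map_option (\<lambda>(E, b). Reset (subst 0 (Lam (Reset (plug (liftc 0 E) (Var 0)))) b))
                       (split_shift s)))"
| "step _ = None"

lemma plug_eq_Lam [simp]: "(plug F t = Lam b) = (F = Hole \<and> t = Lam b)"
  by (cases F) auto

lemma is_val_plug: "is_val (plug F t) \<Longrightarrow> F = Hole \<and> is_val t"
  by (cases F) (auto simp: is_val_def)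

lemma split_shift_plug: "pure E \<Longrightarrow> split_shift (plug E (Shift b)) = Some (E, b)"
  by (induction E) (auto dest: is_val_plug simp: is_val_def)

lemma split_shift_SomeD: "split_shift s = Some (E, b) \<Longrightarrow> pure E \<and> s = plug E (Shift b)"
  by (induction s arbitrary: E b rule: split_shift.induct) (auto split: if_splits)

lemma step_plug_Shift: "pure E \<Longrightarrow> step (plug E (Shift b)) = None"
  by (induction E) (auto dest: is_val_plug simp: is_val_def)

lemma step_plug:
  "step r = Some r' \<Longrightarrow> \<not> is_val r \<Longrightarrow> evctx F \<Longrightarrow> step (plug F r) = Some (plug F r')"
  by (induction F) (auto dest: is_val_plug)

lemma red_imp_step: "red t u \<Longrightarrow> step t = Some u"
  by (induction rule: red.induct)
    (intro step_plug; auto simp: is_val_def split_shift_plug step_plug_Shift dest: is_val_plug)+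

lemma step_imp_red: "step t = Some u \<Longrightarrow> red t u"
proof (induction t arbitrary: u rule: step.induct)
  case (1 t u')
  consider "is_val t" "is_val u'" | "is_val t" "\<not> is_val u'" | "\<not> is_val t" by blast
  then show ?case
  proof cases
    case 1
    with "1.prems" show ?thesis using red.beta[of Hole u'] by (auto simp: is_val_def)
  next
    case 2
    with "1.IH" "1.prems" show ?thesis using red_plug[of _ _ "CArgR t Hole"] by auto
  next
    case 3
    with "1.IH" "1.prems" show ?thesis using red_plug[of _ _ "CAppL Hole u'"] by auto
  qed
next
  case (2 s u)
  consider "is_val s" | s' where "\<not> is_val s" "step s = Some s'" | "\<not> is_val s" "step s = None"
    by blast
  then show ?case
  proof cases
    case 1
    with "2.prems" show ?thesis using red.reset[of Hole s] by simp
  next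
    case 2
    with "2.IH" "2.prems" show ?thesis using red_plug[of _ _ "CReset Hole"] by auto
  next
    case 3
    with "2.prems" show ?thesis using red.shift[of Hole] by (auto dest!: split_shift_SomeD)
  qed
qed auto

lemma red_iff_step: "red t u \<longleftrightarrow> step t = Some u"
  using red_imp_step step_imp_red by blast

lemma red_deterministic: "red t u \<Longrightarrow> red t u' \<Longrightarrow> u = u'"
  by (simp add: red_iff_step)

lemma is_val_irreducible: "is_val v \<Longrightarrow> \<not> red v u"
  by (auto simp: is_val_def red_iff_step)

lemma reds_to_irreducible:
  "reds a b \<Longrightarrow> reds a c \<Longrightarrow> \<not> (\<exists>u. red c u) \<Longrightarrow> reds b c"
proof (induction rule: converse_rtranclp_induct)
  case (step y z)
  from step.prems(1) show ?case
  proof (cases rule: converse_rtranclpE)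
    case base
    with step show ?thesis by blast
  next
    case (step w)
    with \<open>red y z\<close> have "w = z" using red_deterministic by blast
    with step show ?thesis using \<open>reds z c \<Longrightarrow> _ \<Longrightarrow> _\<close> \<open>\<not> (\<exists>u. red c u)\<close> by blast
  qed
qed simp

lemma evals_to_value_reds: "reds a b \<Longrightarrow> evals_to_value a = evals_to_value b"
  unfolding evals_to_value_def evals_def
  using reds_to_irreducible by (meson rtranclp_trans)

lemma evals_to_value_red: "red a b \<Longrightarrow> evals_to_value a = evals_to_value b"
  by (simp add: evals_to_value_reds r_into_rtranclp)

lemma red_Reset_prog: "red (Reset p) u \<Longrightarrow> is_prog p \<Longrightarrow> \<exists>p'. red p p' \<and> u = Reset p'"
  by (auto simp: is_prog_def is_val_def red_iff_step split: option.splits)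

lemma red_prog: "red p u \<Longrightarrow> is_prog p \<Longrightarrow> is_prog u \<or> is_val u"
  by (auto simp: is_prog_def red_iff_step split: option.splits if_splits)

lemma reds_Reset_to_value:
  "reds (Reset p) w \<Longrightarrow> is_val w \<Longrightarrow> is_prog p \<or> is_val p \<Longrightarrow> \<exists>v. reds p v \<and> is_val v"
proof (induction "Reset p" arbitrary: p rule: converse_rtranclp_induct)
  case base
  then show ?case by (auto simp: is_val_def)
next
  case (step z)
  show ?case
  proof (cases "is_val p")
    case False
    with step.prems have "is_prog p" by blast
    then obtain p' where p': "red p p'" "z = Reset p'" using red_Reset_prog step.hyps(1) by blast
    with \<open>is_prog p\<close> have "is_prog p' \<or> is_val p'" using red_prog by blast
    with p' step obtain v where "reds p' v" "is_val v" by blast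
    with p' show ?thesis by (meson converse_rtranclp_into_rtranclp)
  qed blast
qed

lemma evals_to_value_prog:
  "evals_to_value (Reset p) \<Longrightarrow> is_prog p \<Longrightarrow> \<exists>v. reds p v \<and> is_val v"
  unfolding evals_to_value_def evals_def using reds_Reset_to_value by blast

lemma red_value_evals_to_value: "red p v \<Longrightarrow> is_val v \<Longrightarrow> evals_to_value (Reset p)"
proof -
  assume p: "red p v" and v: "is_val v"
  have "red (Reset p) (Reset v)" using red_Reset_plug[OF p, of Hole] by simp
  moreover have "red (Reset v) v" using red.reset[of Hole v] v by simp
  ultimately have "reds (Reset p) v" by auto
  with v show ?thesis using is_val_irreducible unfolding evals_to_value_def evals_def by blast
qed

lemma term_cl_empty: "term_cl {} a b \<Longrightarrow> a = b"
  by (induction rule: term_cl.induct) auto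

lemma hat_evctx_closed:
  "hat E F0 F1 \<Longrightarrow> evctx F0 \<and> evctx F1 \<and> closed_ctx_at 0 F0 \<and> closed_ctx_at 0 F1"
  by (induction rule: hat.induct) (auto simp: tilde_def closed_def)

lemma hat_empty: "hat {} F0 F1 \<Longrightarrow> F0 = F1"
  by (induction rule: hat.induct) (auto simp: tilde_def dest: term_cl_empty)

lemma tilde_plug: "hat E F0 F1 \<Longrightarrow> tilde E a b \<Longrightarrow> tilde E (plug F0 a) (plug F1 b)"
  by (induction rule: hat.induct) (auto simp: tilde_def closed_def intro: term_cl.intros)

lemma hat_ctx_comp: "hat E F0 F1 \<Longrightarrow> hat E G0 G1 \<Longrightarrow> hat E (ctx_comp F0 G0) (ctx_comp F1 G1)"
  by (induction rule: hat.induct) (auto intro: hat.intros)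

lemma term_cl_insert_eq_subst:
  assumes "is_env E" and "closed v0" and "closed v1"
    and "term_cl (insert (v0, v1) E) s0 s1"
  shows "\<exists>c0 c1. term_cl E c0 c1 \<and> subst n v0 c0 = s0 \<and> subst n v1 c1 = s1"
  using assms(4)
proof (induction arbitrary: n rule: term_cl.induct)
  case (base a b)
  show ?case
  proof (cases "(a, b) = (v0, v1)")
    case True
    then show ?thesis by (intro exI[of _ "Var n"]) (auto intro: term_cl.var)
  next
    case False
    with base have "(a, b) \<in> E" by auto
    moreover from this assms(1) have "closed a" "closed b" by (auto simp: is_env_def)
    ultimately show ?thesis
      by (intro exI[of _ a] exI[of _ b]) (auto intro: term_cl.base subst_closed_at simp: closed_def)
  qed
next
  case (var i)
  show ?case
    using subst_lift[of n _ "Var i"] by (intro exI[of _ "lift n (Var i)"]) (auto intro: term_cl.var)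
next
  case (lam t t')
  then obtain a b where "term_cl E a b" "subst (Suc n) v0 a = t" "subst (Suc n) v1 b = t'"
    by blast
  with assms(2,3) show ?case
    by (intro exI[of _ "Lam a"] exI[of _ "Lam b"]) (auto intro: term_cl.lam simp: lift_closed)
next
  case (app t t' u u')
  then obtain a b c d where "term_cl E a b" "subst n v0 a = t" "subst n v1 b = t'"
    "term_cl E c d" "subst n v0 c = u" "subst n v1 d = u'" by metis
  then show ?case by (intro exI[of _ "App a c"] exI[of _ "App b d"]) (auto intro: term_cl.app)
next
  case (sft t t')
  then obtain a b where "term_cl E a b" "subst (Suc n) v0 a = t" "subst (Suc n) v1 b = t'"
    by blast
  with assms(2,3) show ?case
    by (intro exI[of _ "Shift a"] exI[of _ "Shift b"]) (auto intro: term_cl.sft simp: lift_closed)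
next
  case (rst t t')
  then obtain a b where "term_cl E a b" "subst n v0 a = t" "subst n v1 b = t'" by blast
  then show ?case by (intro exI[of _ "Reset a"] exI[of _ "Reset b"]) (auto intro: term_cl.rst)
qed

definition ctx_related :: "env \<Rightarrow> trm \<Rightarrow> trm \<Rightarrow> bool" where
  "ctx_related E t0 t1 \<longleftrightarrow> (\<forall>F0 F1. hat E F0 F1 \<longrightarrow>
      evals_to_value (Reset (plug F0 t0)) = evals_to_value (Reset (plug F1 t1)))"

definition sound_env :: "env \<Rightarrow> bool" where
  "sound_env E \<longleftrightarrow> is_env E \<and>
     (\<forall>s0 s1. tilde E s0 s1 \<longrightarrow> evals_to_value (Reset s0) = evals_to_value (Reset s1))"

definition ctx_bisim :: "envrel_elem set" where
  "ctx_bisim = {Env E | E. sound_env E} \<union>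
     {Tri E t0 t1 | E t0 t1. is_env E \<and> closed t0 \<and> closed t1 \<and> ctx_related E t0 t1}"

lemma Env_in_ctx_bisim [simp]: "Env E \<in> ctx_bisim \<longleftrightarrow> sound_env E"
  by (auto simp: ctx_bisim_def)

lemma Tri_in_ctx_bisim [simp]:
  "Tri E t0 t1 \<in> ctx_bisim \<longleftrightarrow> is_env E \<and> closed t0 \<and> closed t1 \<and> ctx_related E t0 t1"
  by (auto simp: ctx_bisim_def)

lemma ctx_related_Hole:
  "ctx_related E t0 t1 \<Longrightarrow> evals_to_value (Reset t0) = evals_to_value (Reset t1)"
  unfolding ctx_related_def using hat.hole by fastforce

lemma ctx_related_reds:
  assumes "reds t0 t0'" and "reds t1 t1'"
  shows "ctx_related E t0 t1 \<longleftrightarrow> ctx_related E t0' t1'"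
proof -
  have "evals_to_value (Reset (plug F t)) = evals_to_value (Reset (plug F t'))"
    if "reds t t'" and "evctx F" for F t t'
    using reds_plug[OF that(1), of "CReset F"] that(2) by (simp add: evals_to_value_reds)
  with assms show ?thesis unfolding ctx_related_def by (metis hat_evctx_closed)
qed

lemma ctx_related_pure_Reset:
  assumes "ctx_related E t0 t1" and "hat E E0 E1"
  shows "ctx_related E (Reset (plug E0 t0)) (Reset (plug E1 t1))"
  unfolding ctx_related_def
proof (intro allI impI)
  fix F0 F1
  assume "hat E F0 F1"
  with assms(2) have "hat E (ctx_comp F0 (CReset E0)) (ctx_comp F1 (CReset E1))"
    by (simp add: hat.rst hat_ctx_comp)
  with assms(1) show "evals_to_value (Reset (plug F0 (Reset (plug E0 t0)))) =
      evals_to_value (Reset (plug F1 (Reset (plug E1 t1))))"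
    unfolding ctx_related_def by fastforce
qed

lemma sound_env_insert_values:
  assumes rel: "ctx_related E p0 p1" and env: "is_env E"
    and p0: "reds p0 v0" "is_val v0" "closed v0" and p1: "reds p1 v1" "is_val v1" "closed v1"
  shows "sound_env ({(v0, v1)} \<union> E)"
  unfolding sound_env_def
proof (intro conjI allI impI)
  show "is_env ({(v0, v1)} \<union> E)" using env p0 p1 by (auto simp: is_env_def)
next
  fix s0 s1
  assume "tilde ({(v0, v1)} \<union> E) s0 s1"
  then have cl: "term_cl (insert (v0, v1) E) s0 s1" "closed s0" "closed s1"
    by (auto simp: tilde_def)
  obtain a b where ab: "term_cl E a b" "subst 0 v0 a = s0" "subst 0 v1 b = s1"
    using term_cl_insert_eq_subst[OF env p0(3) p1(3) cl(1)] by blast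
  with cl p0(3) p1(3) have "tilde E (Lam a) (Lam b)"
    by (auto simp: tilde_def closed_def closed_at_subst_iff intro: term_cl.lam)
  then have "hat E (CArgR (Lam a) Hole) (CArgR (Lam b) Hole)"
    by (auto intro: hat.intros simp: is_val_def)
  with rel have "evals_to_value (Reset (App (Lam a) p0)) = evals_to_value (Reset (App (Lam b) p1))"
    unfolding ctx_related_def by fastforce
  with ab show "evals_to_value (Reset s0) = evals_to_value (Reset s1)"
    using reds_Reset_beta[OF p0(1,2), of a] reds_Reset_beta[OF p1(1,2), of b]
    by (simp add: evals_to_value_reds)
qed

lemma ctx_related_beta:
  assumes "sound_env E" and "(Lam t0, Lam t1) \<in> E"
    and "is_val v0" and "is_val v1" and "tilde E v0 v1"
  shows "ctx_related E (subst 0 v0 t0) (subst 0 v1 t1)"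
  unfolding ctx_related_def
proof (intro allI impI)
  fix F0 F1
  assume h: "hat E F0 F1"
  have "is_env E" using assms(1) by (simp add: sound_env_def)
  with assms(2,5) have "tilde E (App (Lam t0) v0) (App (Lam t1) v1)"
    by (auto simp: tilde_def closed_def is_env_def intro: term_cl.intros)
  with assms(1) h have "evals_to_value (Reset (plug F0 (App (Lam t0) v0))) =
      evals_to_value (Reset (plug F1 (App (Lam t1) v1)))"
    unfolding sound_env_def using tilde_plug by blast
  moreover have "red (Reset (plug F (App (Lam t) v))) (Reset (plug F (subst 0 v t)))"
    if "evctx F" and "is_val v" for F t v
    using red.beta[of "CReset F" v t] that by simp
  ultimately show "evals_to_value (Reset (plug F0 (subst 0 v0 t0))) =
      evals_to_value (Reset (plug F1 (subst 0 v1 t1)))"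
    using hat_evctx_closed[OF h] assms(3,4) by (metis evals_to_value_red)
qed

lemma reds_value_if_Reset_evals_eq:
  assumes "evals_to_value (Reset p) = evals_to_value (Reset q)" and "is_prog q"
    and "red p v" and "is_val v"
  obtains w where "reds q w" and "is_val w"
  using assms red_value_evals_to_value evals_to_value_prog by metis

lemma Env_insert_in_ctx_bisim:
  assumes "Tri E p0 p1 \<in> ctx_bisim"
    and "reds p0 v0" and "is_val v0" and "reds p1 v1" and "is_val v1"
  shows "Env ({(v0, v1)} \<union> E) \<in> ctx_bisim"
  using assms sound_env_insert_values reds_closed by auto

lemma env_bisim_p_ctx_bisim: "env_bisim_p ctx_bisim"
  unfolding env_bisim_p_def
proof (intro conjI allI impI)
  show "env_rel ctx_bisim" by (auto simp: env_rel_def sound_env_def)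
next
  fix E t0 t1 E0 E1
  assume "Tri E t0 t1 \<in> ctx_bisim \<and> \<not> (is_prog t0 \<and> is_prog t1)" and "pure E0 \<and> pure E1 \<and> hat E E0 E1"
  then show "Tri E (Reset (plug E0 t0)) (Reset (plug E1 t1)) \<in> ctx_bisim"
    using hat_evctx_closed[of E E0 E1] by (auto simp: ctx_related_pure_Reset closed_def)
next
  fix E t0 t1 v0 v1
  assume "Env E \<in> ctx_bisim \<and> (Lam t0, Lam t1) \<in> E \<and> is_val v0 \<and> is_val v1 \<and> tilde E v0 v1"
  then show "Tri E (subst 0 v0 t0) (subst 0 v1 t1) \<in> ctx_bisim"
    by (auto simp: ctx_related_beta sound_env_def is_env_def tilde_def closed_def
        closed_at_subst_iff)
next
  fix E p0 p1 p0'
  assume "Tri E p0 p1 \<in> ctx_bisim \<and> is_prog p0 \<and> is_prog p1" and "red p0 p0' \<and> is_prog p0'"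
  then show "\<exists>p1'. reds p1 p1' \<and> is_prog p1' \<and> Tri E p0' p1' \<in> ctx_bisim"
    using red_closed ctx_related_reds[OF r_into_rtranclp rtranclp.rtrancl_refl]
    by (metis Tri_in_ctx_bisim rtranclp.rtrancl_refl)
next
  fix E p0 p1 p1'
  assume "Tri E p0 p1 \<in> ctx_bisim \<and> is_prog p0 \<and> is_prog p1" and "red p1 p1' \<and> is_prog p1'"
  then show "\<exists>p0'. reds p0 p0' \<and> is_prog p0' \<and> Tri E p0' p1' \<in> ctx_bisim"
    using red_closed ctx_related_reds[OF rtranclp.rtrancl_refl r_into_rtranclp]
    by (metis Tri_in_ctx_bisim rtranclp.rtrancl_refl)
next
  fix E p0 p1 v0
  assume rel: "Tri E p0 p1 \<in> ctx_bisim \<and> is_prog p0 \<and> is_prog p1" and v0: "red p0 v0 \<and> is_val v0"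
  then obtain v1 where "reds p1 v1" "is_val v1"
    using ctx_related_Hole reds_value_if_Reset_evals_eq by (metis Tri_in_ctx_bisim)
  with rel v0 show "\<exists>v1. reds p1 v1 \<and> is_val v1 \<and> Env ({(v0, v1)} \<union> E) \<in> ctx_bisim"
    using Env_insert_in_ctx_bisim r_into_rtranclp by blast
next
  fix E p0 p1 v1
  assume rel: "Tri E p0 p1 \<in> ctx_bisim \<and> is_prog p0 \<and> is_prog p1" and v1: "red p1 v1 \<and> is_val v1"
  then obtain v0 where "reds p0 v0" "is_val v0"
    using ctx_related_Hole reds_value_if_Reset_evals_eq by (metis Tri_in_ctx_bisim)
  with rel v1 show "\<exists>v0. reds p0 v0 \<and> is_val v0 \<and> Env ({(v0, v1)} \<union> E) \<in> ctx_bisim"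
    using Env_insert_in_ctx_bisim r_into_rtranclp by blast
qed

theorem lemma17:
  fixes t0 t1 :: trm
  assumes "closed t0" and "closed t1"
    and "ctx_equiv_p t0 t1"
  shows "bisim_p {} t0 t1"
proof -
  have "ctx_related {} t0 t1"
    unfolding ctx_related_def
  proof (intro allI impI)
    fix F0 F1
    assume h: "hat {} F0 F1"
    then have "F0 = F1" and "evctx F0" and "closed_ctx F0"
      using hat_empty hat_evctx_closed closed_ctx_eq_closed_ctx_at by blast+
    with assms(3) show "evals_to_value (Reset (plug F0 t0)) = evals_to_value (Reset (plug F1 t1))"
      unfolding ctx_equiv_p_def by blast
  qed
  with assms(1,2) have "Tri {} t0 t1 \<in> ctx_bisim" by (simp add: is_env_def)
  then show ?thesis
    using env_bisim_p_ctx_bisim unfolding bisim_p_def env_bisimilar_p_def by blast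
qed

end
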